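(* For any essentially distributed Petri net $N$ there is an LSGA net $N'$ with $N'\approx^\Delta_{bSTb}N$.
   Context: Fix visible actions $\mathrm{Act}$ and $\tau\notin\mathrm{Act}$. A Petri net $N=(S,T,F,M_0,\ell)$: $S,T$ disjoint, $F:(S\times T)\cup(T\times S)\to\mathbb N$, $M_0\in\mathbb N^S$, $\ell:T\to\mathrm{Act}\cup\{\tau\}$. ${}^\bullet x(y)=F(y,x)$, $x^\bullet(y)=F(x,y)$ (multisets, extended additively); for a finite nonempty multiset $G$ of transitions $M[G\rangle M'$ iff ${}^\bullet G\le M$ and $M'=M-{}^\bullet G+G^\bullet$; reachable markings as usual; $t\smile u$ iff $M[\{t\}+\{u\}\rangle$ for some reachable $M$. Essentially distributed: there is a function $D$ on $S\cup T$ such that (1) $s\in{}^\bullet t\Rightarrow D(t)=D(s)$, and (2') for all $t,u\in T$, if $t\smile u$ and $\ell(t)\ne\tau$ then $D(t)\ne D(u)$. Components and LSGA nets: a component with interface is $(N,I,O)$ with $I,O\subseteq S$, $I\cap O=\emptyset$ and $o^\bullet=\emptyset$ for all $o\in O$. It is sequential iff there is $Q\subseteq S\setminus(I\cup O)$ such that for every $t\in T$, $|{}^\bullet t\restriction Q|=1$ and $|t^\bullet\restriction Q|=1$, and $|M_0\restriction Q|=1$ (cardinality with multiplicity). Given components $((S_k,T_k,F_k,M_{0k},\ell_k),I_k,O_k)$, $k\in K$, with $(S_k\cup T_k)\cap(S_l\cup T_l)=(I_k\cup O_k)\cap(I_l\cup O_l)$ and $I_k\cap I_l=\emptyset$ for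 $k\ne l$, their asynchronous parallel composition is $((\bigcup S_k,\bigcup T_k,\bigcup F_k,\sum M_{0k},\bigcup\ell_k),\bigcup I_k,\bigcup O_k\setminus\bigcup I_k)$. A net $N$ is an LSGA net iff $(N,I,O)$ is the asynchronous parallel composition of some family of sequential components, for some $I,O$. $\approx^\Delta_{bSTb}$: LTS notation: $\Rightarrow$ reflexive transitive closure of $\xrightarrow{\tau}$; $\mathfrak M\xrightarrow{(\alpha)}\mathfrak M'$ iff $\mathfrak M\xrightarrow{\alpha}\mathfrak M'$ or ($\alpha=\tau$ and $\mathfrak M=\mathfrak M'$). A branching bisimulation with explicit divergence is a relation $\mathcal B$ between the states of two LTSs, relating initial states, such that if $\mathfrak M_1\mathcal B\mathfrak M_2$ and $\mathfrak M_1\xrightarrow{\alpha}\mathfrak M_1'$ then $\mathfrak M_2\Rightarrow\mathfrak M_2^\dagger\xrightarrow{(\alpha)}\mathfrak M_2'$ with $\mathfrak M_1\mathcal B\mathfrak M_2^\dagger$, $\mathfrak M_1'\mathcal B\mathfrak M_2'$, and symmetrically; and if $\mathfrak M_1\mathcal B\mathfrak M_2$ and there is an infinite $\tau$-sequence from $\mathfrak M_1$ all of whose states are related to $\mathfrak M_2$, then there is an infinite $\tau$-sequence from $\mathfrak M_2$ such that every state of the first is related to every state of the second, and symmetrically. ST-LTS of a net: states $(M,U)\in\mathbb N^S\times T^*$, initial $(M_0,\varepsilon)$; $(M,U)\xrightarrow{a^+}(M-{}^\bullet t,Ut)$ iff $\ell(t)=a\in\mathrm{Act}$ and $M[t\rangle$;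 $(M,U)\xrightarrow{a^{-n}}(M+t^\bullet,U^{-n})$ iff the $n$-th element $t$ of $U$ has label $a$ ($U^{-n}$ removes it); $(M,U)\xrightarrow{\tau}(M',U)$ iff $M[t\rangle M'$ with $\ell(t)=\tau$. $N_1\approx^\Delta_{bSTb}N_2$ iff their ST-LTSs are related by a branching bisimulation with explicit divergence. *)

theory Defs
  imports Main "HOL-Library.Multiset"
begin

text \<open>A labelled Petri net N = (S,T,F,M0,l). Places have type 's, transitions type 't
  (so S and T are disjoint by typing). Visible actions are the elements of type 'a;
  the invisible action tau is None, so l : T -> Act + {tau} is a map into 'a option.
  The flow F is split into pre s t = F(s,t) and post t s = F(t,s).\<close>

record ('s,'t,'a) pnet =
  places :: "'s set"
  trans  :: "'t set"
  pre    :: "'s \<Rightarrow> 't \<Rightarrow> nat"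
  post   :: "'t \<Rightarrow> 's \<Rightarrow> nat"
  init   :: "'s \<Rightarrow> nat"
  lab    :: "'t \<Rightarrow> 'a option"

definition wf_net :: "('s,'t,'a) pnet \<Rightarrow> bool" where
  "wf_net N \<longleftrightarrow>
     (\<forall>s t. pre N s t \<noteq> 0 \<longrightarrow> s \<in> places N \<and> t \<in> trans N) \<and>
     (\<forall>t s. post N t s \<noteq> 0 \<longrightarrow> s \<in> places N \<and> t \<in> trans N) \<and>
     (\<forall>s. init N s \<noteq> 0 \<longrightarrow> s \<in> places N)"

definition pre_ms :: "('s,'t,'a) pnet \<Rightarrow> 't multiset \<Rightarrow> 's \<Rightarrow> nat" where
  "pre_ms N G s = sum_mset (image_mset (pre N s) G)"

definition post_ms :: "('s,'t,'a) pnet \<Rightarrow> 't multiset \<Rightarrow> 's \<Rightarrow> nat" where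
  "post_ms N G s = sum_mset (image_mset (\<lambda>t. post N t s) G)"

definition fire_ms :: "('s,'t,'a) pnet \<Rightarrow> ('s \<Rightarrow> nat) \<Rightarrow> 't multiset \<Rightarrow> ('s \<Rightarrow> nat) \<Rightarrow> bool" where
  "fire_ms N M G M' \<longleftrightarrow> G \<noteq> {#} \<and> set_mset G \<subseteq> trans N \<and>
     (\<forall>s. pre_ms N G s \<le> M s) \<and> M' = (\<lambda>s. M s - pre_ms N G s + post_ms N G s)"

inductive reachable :: "('s,'t,'a) pnet \<Rightarrow> ('s \<Rightarrow> nat) \<Rightarrow> bool" for N where
  reach_init: "reachable N (init N)"
| reach_step: "reachable N M \<Longrightarrow> fire_ms N M {#t#} M' \<Longrightarrow> reachable N M'"

definition conc :: "('s,'t,'a) pnet \<Rightarrow> 't \<Rightarrow> 't \<Rightarrow> bool" where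
  "conc N t u \<longleftrightarrow> (\<exists>M M'. reachable N M \<and> fire_ms N M ({#t#} + {#u#}) M')"

text \<open>The distribution D is a function on S u T; its codomain
  (the set of locations) is represented by 's + 't itself, which is no restriction since
  only the induced partition of S u T matters (pick a representative of each class).\<close>
definition ess_distributed :: "('s,'t,'a) pnet \<Rightarrow> bool" where
  "ess_distributed N \<longleftrightarrow> (\<exists>D :: 's + 't \<Rightarrow> 's + 't.
     (\<forall>t\<in>trans N. \<forall>s\<in>places N. pre N s t > 0 \<longrightarrow> D (Inr t) = D (Inl s)) \<and>
     (\<forall>t\<in>trans N. \<forall>u\<in>trans N. conc N t u \<and> lab N t \<noteq> None \<longrightarrow> D (Inr t) \<noteq> D (Inr u)))"

type_synonym ('s,'t,'a) comp = "('s,'t,'a) pnet \<times> 's set \<times> 's set"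

definition is_component :: "('s,'t,'a) comp \<Rightarrow> bool" where
  "is_component c \<longleftrightarrow> (case c of (N, I, Out) \<Rightarrow>
     wf_net N \<and> I \<subseteq> places N \<and> Out \<subseteq> places N \<and> I \<inter> Out = {} \<and>
     (\<forall>p\<in>Out. \<forall>t. pre N p t = 0))"

definition one_on :: "'s set \<Rightarrow> ('s \<Rightarrow> nat) \<Rightarrow> bool" where
  "one_on Q f \<longleftrightarrow> (\<exists>q\<in>Q. f q = 1 \<and> (\<forall>q'\<in>Q. q' \<noteq> q \<longrightarrow> f q' = 0))"

definition sequential :: "('s,'t,'a) comp \<Rightarrow> bool" where
  "sequential c \<longleftrightarrow> is_component c \<and> (case c of (N, I, Out) \<Rightarrow>
     (\<exists>Q. Q \<subseteq> places N - (I \<union> Out) \<and>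
        (\<forall>t\<in>trans N. one_on Q (\<lambda>q. pre N q t) \<and> one_on Q (\<lambda>q. post N t q)) \<and>
        one_on Q (init N)))"

text \<open>The family is given as a set of components (distinct members play the role of k \<noteq> l).
  The sum of initial markings is required to be well defined (finitely many nonzero
  summands at every place).\<close>
definition async_comp ::
  "('s,'t,'a) comp set \<Rightarrow> ('s,'t,'a) pnet \<Rightarrow> 's set \<Rightarrow> 's set \<Rightarrow> bool" where
  "async_comp C N I Out \<longleftrightarrow>
     (\<forall>c\<in>C. is_component c) \<and>
     (\<forall>c\<in>C. \<forall>d\<in>C. c \<noteq> d \<longrightarrow>
        places (fst c) \<inter> places (fst d) =
          (fst (snd c) \<union> snd (snd c)) \<inter> (fst (snd d) \<union> snd (snd d)) \<and>
        trans (fst c) \<inter> trans (fst d) = {} \<and>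
        fst (snd c) \<inter> fst (snd d) = {}) \<and>
     wf_net N \<and>
     places N = (\<Union>c\<in>C. places (fst c)) \<and>
     trans N = (\<Union>c\<in>C. trans (fst c)) \<and>
     (\<forall>c\<in>C. \<forall>t\<in>trans (fst c).
        (\<forall>s. pre N s t = pre (fst c) s t \<and> post N t s = post (fst c) t s) \<and>
        lab N t = lab (fst c) t) \<and>
     (\<forall>s. finite {c\<in>C. init (fst c) s \<noteq> 0} \<and>
          init N s = (\<Sum>c\<in>{c\<in>C. init (fst c) s \<noteq> 0}. init (fst c) s)) \<and>
     I = (\<Union>c\<in>C. fst (snd c)) \<and>
     Out = (\<Union>c\<in>C. snd (snd c)) - (\<Union>c\<in>C. fst (snd c))"

definition LSGA :: "('s,'t,'a) pnet \<Rightarrow> bool" where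
  "LSGA N \<longleftrightarrow> (\<exists>C I Out. (\<forall>c\<in>C. sequential c) \<and> async_comp C N I Out)"

datatype 'a st_act = StartA 'a | EndA 'a nat | TauA

text \<open>States (M,U); EndA a n refers to the n-th element of U (1-based).\<close>
definition st_step :: "('s,'t,'a) pnet \<Rightarrow> ('s \<Rightarrow> nat) \<times> 't list \<Rightarrow> 'a st_act
                        \<Rightarrow> ('s \<Rightarrow> nat) \<times> 't list \<Rightarrow> bool" where
  "st_step N x \<alpha> y \<longleftrightarrow> (case \<alpha> of
      StartA a \<Rightarrow> (\<exists>t\<in>trans N. lab N t = Some a \<and> (\<forall>s. pre N s t \<le> fst x s) \<and>
                     fst y = (\<lambda>s. fst x s - pre N s t) \<and> snd y = snd x @ [t])
    | EndA a n \<Rightarrow> 1 \<le> n \<and> n \<le> length (snd x) \<and> lab N (snd x ! (n - 1)) = Some a \<and>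
                     fst y = (\<lambda>s. fst x s + post N (snd x ! (n - 1)) s) \<and>
                     snd y = take (n - 1) (snd x) @ drop n (snd x)
    | TauA \<Rightarrow> (\<exists>t\<in>trans N. lab N t = None \<and> fire_ms N (fst x) {#t#} (fst y) \<and> snd y = snd x))"

definition bb_transfer ::
  "('x \<Rightarrow> 'l \<Rightarrow> 'x \<Rightarrow> bool) \<Rightarrow> ('y \<Rightarrow> 'l \<Rightarrow> 'y \<Rightarrow> bool) \<Rightarrow> 'l \<Rightarrow> ('x \<Rightarrow> 'y \<Rightarrow> bool) \<Rightarrow> bool" where
  "bb_transfer step1 step2 tau B \<longleftrightarrow>
     (\<forall>x y \<alpha> x'. B x y \<and> step1 x \<alpha> x' \<longrightarrow>
        (\<exists>y1 y2. (\<lambda>a b. step2 a tau b)\<^sup>*\<^sup>* y y1 \<and>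
                 (step2 y1 \<alpha> y2 \<or> (\<alpha> = tau \<and> y1 = y2)) \<and> B x y1 \<and> B x' y2))"

definition div_transfer ::
  "('x \<Rightarrow> 'l \<Rightarrow> 'x \<Rightarrow> bool) \<Rightarrow> ('y \<Rightarrow> 'l \<Rightarrow> 'y \<Rightarrow> bool) \<Rightarrow> 'l \<Rightarrow> ('x \<Rightarrow> 'y \<Rightarrow> bool) \<Rightarrow> bool" where
  "div_transfer step1 step2 tau B \<longleftrightarrow>
     (\<forall>x y f. B x y \<and> f 0 = x \<and> (\<forall>i. step1 (f i) tau (f (Suc i))) \<and> (\<forall>i. B (f i) y) \<longrightarrow>
        (\<exists>g. g 0 = y \<and> (\<forall>i. step2 (g i) tau (g (Suc i))) \<and> (\<forall>i j. B (f i) (g j))))"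

definition bb_div ::
  "('x \<Rightarrow> 'l \<Rightarrow> 'x \<Rightarrow> bool) \<Rightarrow> 'x \<Rightarrow> ('y \<Rightarrow> 'l \<Rightarrow> 'y \<Rightarrow> bool) \<Rightarrow> 'y \<Rightarrow> 'l
     \<Rightarrow> ('x \<Rightarrow> 'y \<Rightarrow> bool) \<Rightarrow> bool" where
  "bb_div step1 i1 step2 i2 tau B \<longleftrightarrow> B i1 i2 \<and>
     bb_transfer step1 step2 tau B \<and> bb_transfer step2 step1 tau (conversep B) \<and>
     div_transfer step1 step2 tau B \<and> div_transfer step2 step1 tau (conversep B)"

definition bSTb_div :: "('s1,'t1,'a) pnet \<Rightarrow> ('s2,'t2,'a) pnet \<Rightarrow> bool" where
  "bSTb_div N1 N2 \<longleftrightarrow>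
     (\<exists>B. bb_div (st_step N1) (init N1, []) (st_step N2) (init N2, []) TauA B)"

end

theory Submission
  imports Defs
begin

text \<open>Give every location of the distribution D a token place, and let each transition consume
  and return the token of its own location. A location together with its token is then a
  sequential component, whose inputs are the places located there and whose outputs are the
  foreign places its transitions produce into; the token net is the asynchronous composition
  of these components.

  In the ST-semantics a started visible transition holds its location's token until it ends,
  blocking the other transitions of that location. In N they could not fire meanwhile either:
  the marking before the start is reachable and enables both, so condition (2') places them
  elsewhere. Hence on reachable states the ST-LTSs of N and of the token net are isomorphic,
  and an isomorphism is a branching bisimulation with explicit divergence.\<close>

section \<open>Strong bisimulations\<close>

definition strong_simulation ::
  "('x \<Rightarrow> 'l \<Rightarrow> 'x \<Rightarrow> bool) \<Rightarrow> ('y \<Rightarrow> 'l \<Rightarrow> 'y \<Rightarrow> bool) \<Rightarrow> ('x \<Rightarrow> 'y \<Rightarrow> bool) \<Rightarrow> bool" where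
  "strong_simulation step1 step2 B \<longleftrightarrow>
     (\<forall>x y \<alpha> x'. B x y \<and> step1 x \<alpha> x' \<longrightarrow> (\<exists>y'. step2 y \<alpha> y' \<and> B x' y'))"

lemma strong_simulation_bb_transfer:
  "strong_simulation step1 step2 B \<Longrightarrow> bb_transfer step1 step2 tau B"
  unfolding strong_simulation_def bb_transfer_def by blast

lemma strong_simulation_div_transfer:
  assumes sim: "strong_simulation step1 step2 B" and uniq: "bi_unique B"
  shows "div_transfer step1 step2 tau B"
  unfolding div_transfer_def
proof (intro allI impI)
  fix x y f
  assume "B x y \<and> f 0 = x \<and> (\<forall>i. step1 (f i) tau (f (Suc i))) \<and> (\<forall>i. B (f i) y)"
  then have Bxy: "B x y" and steps: "\<And>i. step1 (f i) tau (f (Suc i))" and Bfy: "\<And>i. B (f i) y"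
    by auto
  have f_const: "f i = x" for i
    using bi_uniqueDl[OF uniq Bfy Bxy] .
  then have "step1 x tau x"
    using steps[of 0] by simp
  then obtain y' where "step2 y tau y'" "B x y'"
    using sim Bxy unfolding strong_simulation_def by blast
  then have "step2 y tau y"
    using bi_uniqueDr[OF uniq Bxy] by simp
  then show "\<exists>g. g 0 = y \<and> (\<forall>i. step2 (g i) tau (g (Suc i))) \<and> (\<forall>i j. B (f i) (g j))"
    using Bxy f_const by (intro exI[of _ "\<lambda>_. y"]) simp
qed

text \<open>By uniqueness, a divergent tau-run related throughout to one state is a tau-loop, which the
  strong bisimulation transfers.\<close>
lemma bi_unique_strong_bisimulation_bb_div:
  assumes "bi_unique B" "B i1 i2"
    and "strong_simulation step1 step2 B" "strong_simulation step2 step1 B\<inverse>\<inverse>"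
  shows "bb_div step1 i1 step2 i2 tau B"
  using assms unfolding bb_div_def
  by (simp add: strong_simulation_bb_transfer strong_simulation_div_transfer)

section \<open>The token net\<close>

lemma fire_ms_single:
  "fire_ms N M {#t#} M' \<longleftrightarrow>
     t \<in> trans N \<and> (\<forall>s. pre N s t \<le> M s) \<and> M' = (\<lambda>s. M s - pre N s t + post N t s)"
  by (simp add: fire_ms_def pre_ms_def post_ms_def)

abbreviation place_code :: "'s \<Rightarrow> ('s + 't + nat) list" where
  "place_code s \<equiv> [Inl s]"

abbreviation trans_code :: "'t \<Rightarrow> ('s + 't + nat) list" where
  "trans_code t \<equiv> [Inr (Inl t)]"

definition token :: "'s + 't \<Rightarrow> ('s + 't + nat) list" where
  "token L = [Inr (Inr 0), map_sum id Inl L]"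

fun decode_place :: "('s + 't + nat) list \<Rightarrow> 's option" where
  "decode_place [Inl s] = Some s"
| "decode_place _ = None"

fun decode_trans :: "('s + 't + nat) list \<Rightarrow> 't option" where
  "decode_trans [Inr (Inl t)] = Some t"
| "decode_trans _ = None"

lemma decode_place_eq_Some [simp]: "decode_place p = Some s \<longleftrightarrow> p = place_code s"
  by (cases p rule: decode_place.cases) auto

lemma decode_trans_eq_Some [simp]: "decode_trans x = Some t \<longleftrightarrow> x = trans_code t"
  by (cases x rule: decode_trans.cases) auto

lemma token_inject [simp]: "token L = token L' \<longleftrightarrow> L = L'"
  by (cases L; cases L') (auto simp: token_def)

lemma token_ne_codes [simp]:
  "token L \<noteq> place_code s" "place_code s \<noteq> token L"
  "decode_place (token L) = None"
  by (auto simp: token_def)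

lemma place_code_cases:
  obtains s where "p = place_code s"
  | L where "p = token L"
  | "decode_place p = None" "p \<notin> range token"
  by (cases "decode_place p") auto

lemma distinct_map_remove_nth:
  assumes "distinct (map f U)" "1 \<le> n" "n \<le> length U"
  shows "set U = insert (U ! (n - 1)) (set (take (n - 1) U @ drop n U))"
    and "f (U ! (n - 1)) \<notin> f ` set (take (n - 1) U @ drop n U)"
    and "distinct (map f (take (n - 1) U @ drop n U))"
proof -
  have U: "U = take (n - 1) U @ U ! (n - 1) # drop n U"
    using id_take_nth_drop[of "n - 1" U] assms(2,3) by simp
  show "set U = insert (U ! (n - 1)) (set (take (n - 1) U @ drop n U))"
    by (subst U) auto
  show "f (U ! (n - 1)) \<notin> f ` set (take (n - 1) U @ drop n U)"
    and "distinct (map f (take (n - 1) U @ drop n U))"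
    using assms(1) by (subst (asm) U; auto)+
qed

locale distributed_net =
  fixes N :: "('s, 't, 'a) pnet" and D :: "'s + 't \<Rightarrow> 's + 't"
  assumes wf: "wf_net N"
    and pre_colocated: "\<And>s t. pre N s t \<noteq> 0 \<Longrightarrow> D (Inr t) = D (Inl s)"
    and conc_visible_separated:
      "\<And>t u. conc N t u \<Longrightarrow> lab N t \<noteq> None \<Longrightarrow> D (Inr t) \<noteq> D (Inr u)"

lemma ess_distributed_imp_distributed_net:
  fixes N :: "('s, 't, 'a) pnet"
  assumes wf: "wf_net N" and "ess_distributed N"
  obtains D where "distributed_net N D"
proof -
  obtain D :: "'s + 't \<Rightarrow> 's + 't" where
    D_pre: "\<forall>t\<in>trans N. \<forall>s\<in>places N. pre N s t > 0 \<longrightarrow> D (Inr t) = D (Inl s)" and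
    D_conc: "\<forall>t\<in>trans N. \<forall>u\<in>trans N. conc N t u \<and> lab N t \<noteq> None \<longrightarrow> D (Inr t) \<noteq> D (Inr u)"
    using assms(2) unfolding ess_distributed_def by blast
  have "distributed_net N D"
  proof
    show "D (Inr t) = D (Inl s)" if "pre N s t \<noteq> 0" for s t
      using that D_pre wf unfolding wf_net_def by auto
    show "D (Inr t) \<noteq> D (Inr u)" if "conc N t u" "lab N t \<noteq> None" for t u
    proof -
      have "t \<in> trans N" "u \<in> trans N"
        using that(1) by (auto simp: conc_def fire_ms_def)
      then show ?thesis
        using D_conc that by blast
    qed
  qed (fact wf)
  then show ?thesis
    by (rule that)
qed

context distributed_net
begin

lemma pre_pos: "0 < pre N s t \<Longrightarrow> s \<in> places N \<and> t \<in> trans N"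
  and post_pos: "0 < post N t s \<Longrightarrow> s \<in> places N \<and> t \<in> trans N"
  and init_pos: "0 < init N s \<Longrightarrow> s \<in> places N"
  using wf by (auto simp: wf_net_def)

definition tn_pre :: "('s + 't + nat) list \<Rightarrow> ('s + 't + nat) list \<Rightarrow> nat" where
  "tn_pre p x = (case decode_trans x of
       None \<Rightarrow> 0
     | Some t \<Rightarrow> (case decode_place p of
          Some s \<Rightarrow> pre N s t
        | None \<Rightarrow> if t \<in> trans N \<and> p = token (D (Inr t)) then 1 else 0))"

definition tn_post :: "('s + 't + nat) list \<Rightarrow> ('s + 't + nat) list \<Rightarrow> nat" where
  "tn_post x p = (case decode_trans x of
       None \<Rightarrow> 0
     | Some t \<Rightarrow> (case decode_place p of
          Some s \<Rightarrow> post N t s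
        | None \<Rightarrow> if t \<in> trans N \<and> p = token (D (Inr t)) then 1 else 0))"

definition tn_init :: "('s + 't + nat) list \<Rightarrow> nat" where
  "tn_init p =
     (case decode_place p of Some s \<Rightarrow> init N s | None \<Rightarrow> if p \<in> range token then 1 else 0)"

definition tn_lab :: "('s + 't + nat) list \<Rightarrow> 'a option" where
  "tn_lab x = (case decode_trans x of Some t \<Rightarrow> lab N t | None \<Rightarrow> None)"

definition token_net :: "(('s + 't + nat) list, ('s + 't + nat) list, 'a) pnet" where
  "token_net = \<lparr>places = place_code ` places N \<union> range token, trans = trans_code ` trans N,
     pre = tn_pre, post = tn_post, init = tn_init, lab = tn_lab\<rparr>"

lemma token_net_simps [simp]:
  "places token_net = place_code ` places N \<union> range token"
  "trans token_net = trans_code ` trans N"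
  "pre token_net = tn_pre" "post token_net = tn_post"
  "init token_net = tn_init" "lab token_net = tn_lab"
  by (simp_all add: token_net_def)

lemma tn_pre_simps [simp]:
  "tn_pre (place_code s) (trans_code t) = pre N s t"
  "tn_pre (token L) (trans_code t) = (if t \<in> trans N \<and> L = D (Inr t) then 1 else 0)"
  "decode_place p = None \<Longrightarrow> p \<notin> range token \<Longrightarrow> tn_pre p x = 0"
  "decode_trans x = None \<Longrightarrow> tn_pre p x = 0"
  by (auto simp: tn_pre_def split: option.splits)

lemma tn_post_simps [simp]:
  "tn_post (trans_code t) (place_code s) = post N t s"
  "tn_post (trans_code t) (token L) = (if t \<in> trans N \<and> L = D (Inr t) then 1 else 0)"
  "decode_place p = None \<Longrightarrow> p \<notin> range token \<Longrightarrow> tn_post x p = 0"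
  "decode_trans x = None \<Longrightarrow> tn_post x p = 0"
  by (auto simp: tn_post_def split: option.splits)

lemma tn_init_simps [simp]:
  "tn_init (place_code s) = init N s" "tn_init (token L) = 1"
  "decode_place p = None \<Longrightarrow> p \<notin> range token \<Longrightarrow> tn_init p = 0"
  by (auto simp: tn_init_def)

lemma tn_lab_trans_code [simp]: "tn_lab (trans_code t) = lab N t"
  by (simp add: tn_lab_def)

lemma wf_token_net: "wf_net token_net"
proof -
  have "p \<in> places token_net \<and> x \<in> trans token_net" if nz: "tn_pre p x \<noteq> 0" for p x
  proof -
    obtain t where x: "x = trans_code t"
      using nz by (cases "decode_trans x") auto
    show ?thesis
      using nz unfolding x by (cases p rule: place_code_cases) (auto split: if_splits dest: pre_pos)
  qed
  moreover have "p \<in> places token_net \<and> x \<in> trans token_net" if nz: "tn_post x p \<noteq> 0" for p x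
  proof -
    obtain t where x: "x = trans_code t"
      using nz by (cases "decode_trans x") auto
    show ?thesis
      using nz unfolding x by (cases p rule: place_code_cases) (auto split: if_splits dest: post_pos)
  qed
  moreover have "p \<in> places token_net" if "tn_init p \<noteq> 0" for p
    using that by (cases p rule: place_code_cases) (auto dest: init_pos)
  ultimately show ?thesis
    unfolding wf_net_def by simp
qed

section \<open>ST-semantics of the token net\<close>

definition pending_pre :: "'t list \<Rightarrow> 's \<Rightarrow> nat" where
  "pending_pre U s = (\<Sum>u\<leftarrow>U. pre N s u)"

lemma pending_pre_simps [simp]:
  "pending_pre [] s = 0"
  "pending_pre (u # U) s = pre N s u + pending_pre U s"
  "pending_pre (U @ V) s = pending_pre U s + pending_pre V s"
  by (simp_all add: pending_pre_def)

text \<open>Undoing the starts of the running transitions U leads back to a reachable marking.\<close>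
fun st_inv :: "('s \<Rightarrow> nat) \<times> 't list \<Rightarrow> bool" where
  "st_inv (M, U) \<longleftrightarrow> reachable N (\<lambda>s. M s + pending_pre U s) \<and>
     (\<forall>u\<in>set U. u \<in> trans N \<and> lab N u \<noteq> None) \<and> distinct (map (\<lambda>u. D (Inr u)) U)"

definition st_embed ::
  "('s \<Rightarrow> nat) \<times> 't list \<Rightarrow> (('s + 't + nat) list \<Rightarrow> nat) \<times> ('s + 't + nat) list list" where
  "st_embed = (\<lambda>(M, U).
     ((\<lambda>p. case decode_place p of
         Some s \<Rightarrow> M s
       | None \<Rightarrow> if p \<in> range token \<and> (\<forall>u\<in>set U. p \<noteq> token (D (Inr u))) then 1 else 0),
      map trans_code U))"

lemma st_embed_simps [simp]:
  "fst (st_embed (M, U)) (place_code s) = M s"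
  "fst (st_embed (M, U)) (token L) = (if \<exists>u\<in>set U. L = D (Inr u) then 0 else 1)"
  "decode_place p = None \<Longrightarrow> p \<notin> range token \<Longrightarrow> fst (st_embed (M, U)) p = 0"
  "snd (st_embed (M, U)) = map trans_code U"
  by (auto simp: st_embed_def)

lemma inj_st_embed: "inj st_embed"
proof (rule injI)
  fix y y' :: "('s \<Rightarrow> nat) \<times> 't list"
  assume eq: "st_embed y = st_embed y'"
  obtain M U M' U' where y: "y = (M, U)" and y': "y' = (M', U')"
    by fastforce
  have "M s = M' s" for s
    using arg_cong[OF eq, of "\<lambda>x. fst x (place_code s)"] by (simp add: y y')
  moreover have "U = U'"
    using arg_cong[OF eq, of snd] by (simp add: y y' inj_map_eq_map inj_def)
  ultimately show "y = y'"
    by (simp add: y y' fun_eq_iff)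
qed

text \<open>Condition (2') in ST form: a running visible transition and a transition enabled now were
  concurrently enabled at the reachable marking before the former started.\<close>
lemma enabled_not_at_running_location:
  assumes inv: "st_inv (M, U)" and u: "u \<in> set U"
    and t: "t \<in> trans N" "\<forall>s. pre N s t \<le> M s"
  shows "D (Inr u) \<noteq> D (Inr t)"
proof -
  have reach: "reachable N (\<lambda>s. M s + pending_pre U s)"
    and vis: "u \<in> trans N" "lab N u \<noteq> None"
    using inv u by auto
  have "pre N s u \<le> pending_pre U s" for s
    unfolding pending_pre_def by (intro member_le_sum_list) (use u in auto)
  then have "\<forall>s. pre_ms N ({#u#} + {#t#}) s \<le> M s + pending_pre U s"
    using t(2) by (simp add: pre_ms_def add_mono add.commute)
  then have "conc N u t"
    unfolding conc_def fire_ms_def using reach vis(1) t(1) by auto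
  then show ?thesis
    using conc_visible_separated vis(2) by blast
qed

lemma token_net_enabled_iff:
  assumes "st_inv (M, U)" "t \<in> trans N"
  shows "(\<forall>p. tn_pre p (trans_code t) \<le> fst (st_embed (M, U)) p) \<longleftrightarrow> (\<forall>s. pre N s t \<le> M s)"
proof
  assume "\<forall>p. tn_pre p (trans_code t) \<le> fst (st_embed (M, U)) p"
  then show "\<forall>s. pre N s t \<le> M s"
    by (metis st_embed_simps(1) tn_pre_simps(1))
next
  assume enabled: "\<forall>s. pre N s t \<le> M s"
  show "\<forall>p. tn_pre p (trans_code t) \<le> fst (st_embed (M, U)) p"
  proof
    fix p
    show "tn_pre p (trans_code t) \<le> fst (st_embed (M, U)) p"
      using enabled enabled_not_at_running_location[OF assms(1) _ assms(2) enabled]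
      by (cases p rule: place_code_cases) (auto dest: sym)
  qed
qed

lemma st_embed_start:
  assumes "st_inv (M, U)" "t \<in> trans N" "\<forall>s. pre N s t \<le> M s"
  shows "(\<lambda>p. fst (st_embed (M, U)) p - tn_pre p (trans_code t))
    = fst (st_embed (\<lambda>s. M s - pre N s t, U @ [t]))"
proof
  fix p
  show "fst (st_embed (M, U)) p - tn_pre p (trans_code t)
    = fst (st_embed (\<lambda>s. M s - pre N s t, U @ [t])) p"
    using assms enabled_not_at_running_location[OF assms(1) _ assms(2,3)]
    by (cases p rule: place_code_cases) (auto dest: sym)
qed

lemma st_embed_tau:
  assumes "st_inv (M, U)" "t \<in> trans N" "\<forall>s. pre N s t \<le> M s"
  shows "(\<lambda>p. fst (st_embed (M, U)) p - tn_pre p (trans_code t) + tn_post (trans_code t) p)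
    = fst (st_embed (\<lambda>s. M s - pre N s t + post N t s, U))"
proof
  fix p
  show "fst (st_embed (M, U)) p - tn_pre p (trans_code t) + tn_post (trans_code t) p
    = fst (st_embed (\<lambda>s. M s - pre N s t + post N t s, U)) p"
    using assms enabled_not_at_running_location[OF assms(1) _ assms(2,3)]
    by (cases p rule: place_code_cases) (auto dest: sym)
qed

lemma st_embed_end:
  assumes "st_inv (M, U)" "1 \<le> n" "n \<le> length U"
  shows "(\<lambda>p. fst (st_embed (M, U)) p + tn_post (trans_code (U ! (n - 1))) p)
    = fst (st_embed (\<lambda>s. M s + post N (U ! (n - 1)) s, take (n - 1) U @ drop n U))"
proof
  fix p
  have "distinct (map (\<lambda>u. D (Inr u)) U)" and running: "\<forall>u\<in>set U. u \<in> trans N"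
    using assms(1) by auto
  note remove = distinct_map_remove_nth[OF this(1) assms(2,3)]
  have "U ! (n - 1) \<in> set U"
    using assms(2,3) by simp
  then show "fst (st_embed (M, U)) p + tn_post (trans_code (U ! (n - 1))) p
    = fst (st_embed (\<lambda>s. M s + post N (U ! (n - 1)) s, take (n - 1) U @ drop n U)) p"
    using remove(2) running by (cases p rule: place_code_cases) (auto simp: remove(1))
qed

lemma st_inv_step:
  assumes inv: "st_inv (M, U)" and step: "st_step N (M, U) \<alpha> (M', U')"
  shows "st_inv (M', U')"
proof (cases \<alpha>)
  case (StartA a)
  then obtain t where t: "t \<in> trans N" "lab N t = Some a" "\<forall>s. pre N s t \<le> M s"
    and M': "M' = (\<lambda>s. M s - pre N s t)" and U': "U' = U @ [t]"
    using step by (auto simp: st_step_def)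
  have "(\<lambda>s. M' s + pending_pre U' s) = (\<lambda>s. M s + pending_pre U s)"
    using t(3) by (auto simp: M' U' fun_eq_iff)
  moreover have "\<forall>u\<in>set U. D (Inr u) \<noteq> D (Inr t)"
    using enabled_not_at_running_location[OF inv _ t(1,3)] by blast
  ultimately show ?thesis
    using inv t(1,2) by (auto simp: U')
next
  case (EndA a n)
  then have n: "1 \<le> n" "n \<le> length U"
    and M': "M' = (\<lambda>s. M s + post N (U ! (n - 1)) s)" and U': "U' = take (n - 1) U @ drop n U"
    using step by (auto simp: st_step_def)
  define u where "u = U ! (n - 1)"
  have reach: "reachable N (\<lambda>s. M s + pending_pre U s)"
    and running: "\<forall>u\<in>set U. u \<in> trans N \<and> lab N u \<noteq> None"
    and dist: "distinct (map (\<lambda>u. D (Inr u)) U)"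
    using inv by auto
  note remove = distinct_map_remove_nth[OF dist n]
  have U: "U = take (n - 1) U @ u # drop n U"
    using id_take_nth_drop[of "n - 1" U] n by (simp add: u_def)
  have pending: "pending_pre U s = pending_pre U' s + pre N s u" for s
    by (subst U) (simp add: U')
  have "u \<in> set U"
    using n by (simp add: u_def)
  then have "fire_ms N (\<lambda>s. M s + pending_pre U s) {#u#} (\<lambda>s. M' s + pending_pre U' s)"
    using running by (auto simp: fire_ms_single pending M' u_def fun_eq_iff)
  then have "reachable N (\<lambda>s. M' s + pending_pre U' s)"
    by (rule reach_step[OF reach])
  then show ?thesis
    using running remove(1,3) by (auto simp: U')
next
  case TauA
  then obtain t where t: "t \<in> trans N" "\<forall>s. pre N s t \<le> M s"
    and M': "M' = (\<lambda>s. M s - pre N s t + post N t s)" and U': "U' = U"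
    using step by (auto simp: st_step_def fire_ms_single)
  have "M s - pre N s t + post N t s + pending_pre U s
      = M s + pending_pre U s - pre N s t + post N t s" for s
    using spec[OF t(2), of s] by simp
  then have "fire_ms N (\<lambda>s. M s + pending_pre U s) {#t#} (\<lambda>s. M' s + pending_pre U' s)"
    using t by (auto simp: fire_ms_single M' U' intro: trans_le_add1)
  then have "reachable N (\<lambda>s. M' s + pending_pre U' s)"
    using inv by (auto intro: reach_step)
  then show ?thesis
    using inv by (simp add: U')
qed

lemma token_net_step_iff:
  assumes inv: "st_inv (M, U)"
  shows "st_step token_net (st_embed (M, U)) \<alpha> x' \<longleftrightarrow>
    (\<exists>y'. st_step N (M, U) \<alpha> y' \<and> x' = st_embed y')"
proof (cases \<alpha>)
  case (StartA a)
  have "st_step token_net (st_embed (M, U)) \<alpha> x' \<longleftrightarrow>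
      (\<exists>t\<in>trans N. lab N t = Some a \<and> (\<forall>s. pre N s t \<le> M s) \<and>
         x' = st_embed (\<lambda>s. M s - pre N s t, U @ [t]))"
    using StartA token_net_enabled_iff[OF inv] st_embed_start[OF inv]
    by (auto simp: st_step_def prod_eq_iff)
  then show ?thesis
    using StartA by (auto simp: st_step_def)
next
  case (EndA a n)
  have "st_step token_net (st_embed (M, U)) \<alpha> x' \<longleftrightarrow>
      1 \<le> n \<and> n \<le> length U \<and> lab N (U ! (n - 1)) = Some a \<and>
      x' = st_embed (\<lambda>s. M s + post N (U ! (n - 1)) s, take (n - 1) U @ drop n U)"
    using EndA st_embed_end[OF inv]
    by (auto simp: st_step_def prod_eq_iff take_map drop_map)
  then show ?thesis
    using EndA by (auto simp: st_step_def)
next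
  case TauA
  have "st_step token_net (st_embed (M, U)) \<alpha> x' \<longleftrightarrow>
      (\<exists>t\<in>trans N. lab N t = None \<and> (\<forall>s. pre N s t \<le> M s) \<and>
         x' = st_embed (\<lambda>s. M s - pre N s t + post N t s, U))"
    using TauA token_net_enabled_iff[OF inv] st_embed_tau[OF inv]
    by (auto simp: st_step_def prod_eq_iff fire_ms_single)
  then show ?thesis
    using TauA by (auto simp: st_step_def fire_ms_single)
qed

lemma st_embed_init: "st_embed (init N, []) = (init token_net, [])"
proof -
  have "fst (st_embed (init N, [])) p = tn_init p" for p
    by (cases p rule: place_code_cases) auto
  then show ?thesis
    by (simp add: prod_eq_iff fun_eq_iff)
qed

lemma bSTb_div_token_net: "bSTb_div token_net N"
proof -
  define B where "B x y \<longleftrightarrow> st_inv y \<and> x = st_embed y" for x y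
  have "bi_unique B"
    using inj_st_embed by (auto simp: bi_unique_def B_def dest: injD)
  moreover have "B (init token_net, []) (init N, [])"
    by (simp add: B_def st_embed_init reach_init)
  moreover have "strong_simulation (st_step token_net) (st_step N) B"
    unfolding strong_simulation_def B_def
  proof (intro allI impI)
    fix x y \<alpha> x'
    assume "(st_inv y \<and> x = st_embed y) \<and> st_step token_net x \<alpha> x'"
    then show "\<exists>y'. st_step N y \<alpha> y' \<and> st_inv y' \<and> x' = st_embed y'"
      using token_net_step_iff st_inv_step by (metis surj_pair)
  qed
  moreover have "strong_simulation (st_step N) (st_step token_net) B\<inverse>\<inverse>"
    unfolding strong_simulation_def conversep_iff B_def
  proof (intro allI impI)
    fix y x \<alpha> y'
    assume "(st_inv y \<and> x = st_embed y) \<and> st_step N y \<alpha> y'"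
    then show "\<exists>x'. st_step token_net x \<alpha> x' \<and> st_inv y' \<and> x' = st_embed y'"
      using token_net_step_iff st_inv_step by (metis surj_pair)
  qed
  ultimately show ?thesis
    unfolding bSTb_div_def by (blast intro: bi_unique_strong_bisimulation_bb_div)
qed

section \<open>Decomposition into sequential components\<close>

definition local_places :: "'s + 't \<Rightarrow> ('s + 't + nat) list set" where
  "local_places L = place_code ` {s \<in> places N. D (Inl s) = L}"

definition export_places :: "'s + 't \<Rightarrow> ('s + 't + nat) list set" where
  "export_places L = place_code `
     {s \<in> places N. D (Inl s) \<noteq> L \<and> (\<exists>t\<in>trans N. D (Inr t) = L \<and> post N t s \<noteq> 0)}"

definition local_trans :: "'s + 't \<Rightarrow> ('s + 't + nat) list set" where
  "local_trans L = trans_code ` {t \<in> trans N. D (Inr t) = L}"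

definition location_net ::
  "'s + 't \<Rightarrow> (('s + 't + nat) list, ('s + 't + nat) list, 'a) pnet" where
  "location_net L = \<lparr>places = insert (token L) (local_places L \<union> export_places L),
     trans = local_trans L,
     pre = (\<lambda>p x. if x \<in> local_trans L then tn_pre p x else 0),
     post = (\<lambda>x p. if x \<in> local_trans L then tn_post x p else 0),
     init = (\<lambda>p. if p = token L \<or> p \<in> local_places L then tn_init p else 0),
     lab = tn_lab\<rparr>"

definition location_component ::
  "'s + 't \<Rightarrow> (('s + 't + nat) list, ('s + 't + nat) list, 'a) comp" where
  "location_component L = (location_net L, local_places L, export_places L)"

lemma location_net_simps [simp]:
  "places (location_net L) = insert (token L) (local_places L \<union> export_places L)"
  "trans (location_net L) = local_trans L"
  "pre (location_net L) p x = (if x \<in> local_trans L then tn_pre p x else 0)"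
  "post (location_net L) x p = (if x \<in> local_trans L then tn_post x p else 0)"
  "init (location_net L) p = (if p = token L \<or> p \<in> local_places L then tn_init p else 0)"
  "lab (location_net L) = tn_lab"
  by (simp_all add: location_net_def)

lemma token_notin_codes [simp]:
  "token L \<notin> local_places L'" "token L \<notin> export_places L'"
  by (auto simp: local_places_def export_places_def local_trans_def)

lemma is_component_location: "is_component (location_component L)"
proof -
  have pre: "p \<in> places (location_net L) \<and> x \<in> local_trans L"
    if nz: "pre (location_net L) p x \<noteq> 0" for p x
  proof -
    from nz obtain t where t: "x = trans_code t" "t \<in> trans N" "D (Inr t) = L"
      by (auto simp: local_trans_def split: if_splits)
    show ?thesis
      using nz pre_colocated[of _ t] pre_pos[of _ t] t
      by (cases p rule: place_code_cases) (auto simp: local_places_def local_trans_def)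
  qed
  have post: "p \<in> places (location_net L) \<and> x \<in> local_trans L"
    if nz: "post (location_net L) x p \<noteq> 0" for p x
  proof -
    from nz obtain t where t: "x = trans_code t" "t \<in> trans N" "D (Inr t) = L"
      by (auto simp: local_trans_def split: if_splits)
    show ?thesis
      using nz post_pos[of t] t
      by (cases p rule: place_code_cases)
        (auto simp: local_places_def export_places_def local_trans_def)
  qed
  have export_unconsumed: "pre (location_net L) p x = 0" if "p \<in> export_places L" for p x
    using that by (auto simp: export_places_def local_trans_def; metis pre_colocated)
  have "init (location_net L) p \<noteq> 0 \<Longrightarrow> p \<in> places (location_net L)" for p
    by (auto split: if_splits)
  then have "wf_net (location_net L)"
    unfolding wf_net_def using pre post by (simp only: location_net_simps(2)) blast
  then show ?thesis
    unfolding is_component_def location_component_def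
    using export_unconsumed by (auto simp: local_places_def export_places_def)
qed

lemma sequential_location: "sequential (location_component L)"
proof -
  have "one_on {token L} f \<longleftrightarrow> f (token L) = 1" for f :: "_ \<Rightarrow> nat"
    by (simp add: one_on_def)
  then show ?thesis
    unfolding sequential_def location_component_def
    using is_component_location[unfolded location_component_def]
    by (auto simp: local_trans_def intro!: exI[of _ "{token L}"])
qed

lemma init_location_owner:
  obtains L0 where "tn_init p = init (location_net L0) p"
    and "\<And>L. L \<noteq> L0 \<Longrightarrow> init (location_net L) p = 0"
proof (cases p rule: place_code_cases)
  case (1 s)
  show ?thesis
  proof (rule that)
    show "tn_init p = init (location_net (D (Inl s))) p"
      using init_pos[of s] by (auto simp: 1 local_places_def)
    show "init (location_net L) p = 0" if "L \<noteq> D (Inl s)" for L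
      using that by (auto simp: 1 local_places_def)
  qed
next
  case (2 L0)
  show ?thesis
    by (rule that[of L0]) (simp_all add: 2)
next
  case 3
  then show ?thesis
    using that by (auto simp: local_places_def)
qed

lemma token_net_init_sum:
  "finite {c \<in> range location_component. init (fst c) p \<noteq> 0} \<and>
   init token_net p = (\<Sum>c\<in>{c \<in> range location_component. init (fst c) p \<noteq> 0}. init (fst c) p)"
  (is "finite ?S \<and> _")
proof -
  obtain L0 where owner: "tn_init p = init (location_net L0) p"
    and others: "\<And>L. L \<noteq> L0 \<Longrightarrow> init (location_net L) p = 0"
    using init_location_owner[where p = p] by blast
  have sub: "?S \<subseteq> {location_component L0}"
  proof
    fix c
    assume "c \<in> ?S"
    then obtain L where c: "c = location_component L" and "init (location_net L) p \<noteq> 0"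
      by (auto simp: location_component_def simp del: location_net_simps)
    then show "c \<in> {location_component L0}"
      using others by (cases "L = L0") auto
  qed
  then have "(\<Sum>c\<in>?S. init (fst c) p) = (\<Sum>c\<in>{location_component L0}. init (fst c) p)"
    by (intro sum.mono_neutral_left) auto
  moreover have "finite ?S"
    using sub by (rule finite_subset) simp
  ultimately show ?thesis
    using owner by (simp add: location_component_def del: location_net_simps)
qed

lemma LSGA_token_net: "LSGA token_net"
proof -
  let ?C = "range location_component"
  have "places token_net = (\<Union>c\<in>?C. places (fst c))"
  proof
    show "places token_net \<subseteq> (\<Union>c\<in>?C. places (fst c))"
    proof
      fix p
      assume "p \<in> places token_net"
      then consider s where "p = place_code s" "s \<in> places N" | L where "p = token L"
        by auto
      then show "p \<in> (\<Union>c\<in>?C. places (fst c))"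
      proof cases
        case (1 s)
        then show ?thesis
          by (intro UN_I[of "location_component (D (Inl s))"])
            (auto simp: location_component_def local_places_def)
      next
        case (2 L)
        then show ?thesis
          by (intro UN_I[of "location_component L"]) (auto simp: location_component_def)
      qed
    qed
    show "(\<Union>c\<in>?C. places (fst c)) \<subseteq> places token_net"
      by (auto simp: location_component_def local_places_def export_places_def)
  qed
  moreover have "trans token_net = (\<Union>c\<in>?C. trans (fst c))"
    by (auto simp: location_component_def local_trans_def)
  moreover have "\<forall>c\<in>?C. \<forall>d\<in>?C. c \<noteq> d \<longrightarrow>
      places (fst c) \<inter> places (fst d) =
        (fst (snd c) \<union> snd (snd c)) \<inter> (fst (snd d) \<union> snd (snd d)) \<and>
      trans (fst c) \<inter> trans (fst d) = {} \<and> fst (snd c) \<inter> fst (snd d) = {}"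
    by (auto simp: location_component_def local_trans_def local_places_def)
  moreover have "\<forall>c\<in>?C. \<forall>x\<in>trans (fst c).
      (\<forall>p. pre token_net p x = pre (fst c) p x \<and> post token_net x p = post (fst c) x p) \<and>
      lab token_net x = lab (fst c) x"
    by (auto simp: location_component_def)
  moreover have "\<forall>c\<in>?C. is_component c"
    using is_component_location by blast
  moreover have "\<forall>p. finite {c \<in> ?C. init (fst c) p \<noteq> 0} \<and>
      init token_net p = (\<Sum>c\<in>{c \<in> ?C. init (fst c) p \<noteq> 0}. init (fst c) p)"
    using token_net_init_sum by blast
  ultimately have "async_comp ?C token_net (\<Union>c\<in>?C. fst (snd c))
      ((\<Union>c\<in>?C. snd (snd c)) - (\<Union>c\<in>?C. fst (snd c)))"
    unfolding async_comp_def using wf_token_net by - (intro conjI; (assumption | rule refl))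
  then show ?thesis
    unfolding LSGA_def using sequential_location by blast
qed

end

theorem theorem4p15:
  fixes N :: "('s, 't, 'a) pnet"
  assumes "wf_net N" and "ess_distributed N"
  shows "\<exists>N' :: (('s + 't + nat) list, ('s + 't + nat) list, 'a) pnet.
           wf_net N' \<and> LSGA N' \<and> bSTb_div N' N"
proof -
  obtain D where "distributed_net N D"
    using assms by (rule ess_distributed_imp_distributed_net)
  then interpret distributed_net N D .
  show ?thesis
    using wf_token_net LSGA_token_net bSTb_div_token_net by blast
qed

end
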